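(* Let $L\in\mathbb N$, ${\bf A}\in\mathbb R^{M\times N}$, ${\bf b}\in\mathbb R^M$, and let ${\bf x}$ follow the gradient flow $\partial_t{\bf x}=-\nabla\mathcal L({\bf x})$, ${\bf x}(0)={\bf x}_0$, with ${\bf x}_0>0$ (entrywise) and ${\bf x}(t)>0$ for all $t\ge 0$ (when $L\neq 2$ and $2-L<0$; for $L=2$ positivity is needed for the logarithm). Then the quantity $$h_0(t):=(I-{\bf A}^\dagger{\bf A})\cdot\begin{cases}\log({\bf x}(t)) & L=2,\\ {\bf x}(t)^{\odot(2-L)} & L\neq2\end{cases}$$ is the same for all $t\ge0$.
   Context: $\odot$ denotes entrywise product/power, $\log$ acts entrywise, vector inequalities are entrywise; ${\bf A}^\dagger$ is the Moore–Penrose pseudoinverse. Loss: $\mathcal L({\bf x})=\frac{1}{2L}\|{\bf A}{\bf x}^{\odot L}-{\bf b}\|_2^2$, with $\nabla\mathcal L({\bf x})=[{\bf A}^\top({\bf A}{\bf x}^{\odot L}-{\bf b})]\odot{\bf x}^{\odot(L-1)}$. *)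

theory Defs
  imports "HOL-Analysis.Analysis"
begin

definition pinv :: "real^'n^'m \<Rightarrow> real^'m^'n" where
  "pinv A = (THE B. A ** B ** A = A \<and> B ** A ** B = B \<and>
                    transpose (A ** B) = A ** B \<and> transpose (B ** A) = B ** A)"

definition epow :: "real^'n \<Rightarrow> nat \<Rightarrow> real^'n" where
  "epow x k = (\<chi> i. (x $ i) ^ k)"

text \<open>Gradient of L(x) = 1/(2L) |A x^L - b|^2, as given in the paper.\<close>
definition gradL :: "real^'n^'m \<Rightarrow> real^'m \<Rightarrow> nat \<Rightarrow> real^'n \<Rightarrow> real^'n" where
  "gradL A b L x = (\<chi> i. (transpose A *v (A *v epow x L - b)) $ i * (x $ i) ^ (L - 1))"

definition h0 :: "real^'n^'m \<Rightarrow> nat \<Rightarrow> real^'n \<Rightarrow> real^'n" where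
  "h0 A L x = (mat 1 - pinv A ** A) *v
     (if L = 2 then (\<chi> i. ln (x $ i)) else (\<chi> i. (x $ i) powr (2 - real L)))"

end

theory Submission
  imports Defs
begin

text \<open>Write \<open>\<phi>(u) = ln u\<close> for \<open>L = 2\<close> and \<open>\<phi>(u) = u\<^sup>2\<^sup>-\<^sup>L\<close> otherwise, so that
  \<open>h\<^sub>0 = (I - A\<^sup>\<dagger>A) \<phi>(x)\<close> entrywise. Along the flow
  \<open>d/dt \<phi>(x\<^sub>i) = -\<phi>'(x\<^sub>i) x\<^sub>i\<^sup>L\<^sup>-\<^sup>1 g\<^sub>i\<close> with \<open>g = A\<^sup>T(A x\<^sup>L - b)\<close>, and
  \<open>\<phi>'(u) u\<^sup>L\<^sup>-\<^sup>1\<close> is the constant \<open>1\<close> resp. \<open>2 - L\<close>. So \<open>d/dt \<phi>(x)\<close> lies in the row space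
  of \<open>A\<close>, which is annihilated by \<open>I - A\<^sup>\<dagger>A\<close> because \<open>A\<^sup>\<dagger>A\<close> is the orthogonal projection
  onto that row space.\<close>

lemma closest_point_subspace_in:
  fixes S :: "'a::euclidean_space set"
  assumes "subspace S"
  shows "closest_point S a \<in> S"
  using assms by (auto intro: closest_point_in_set closed_subspace subspace_0)

lemma closest_point_subspace_orthogonal:
  fixes S :: "'a::euclidean_space set"
  assumes S: "subspace S" and w: "w \<in> S"
  shows "(a - closest_point S a) \<bullet> w = 0"
proof -
  let ?p = "closest_point S a"
  have p: "?p \<in> S" using closest_point_subspace_in[OF S] .
  have "(a - ?p) \<bullet> ((?p + w) - ?p) \<le> 0"
    using S p w by (intro closest_point_dot) (auto simp: subspace_imp_convex closed_subspace subspace_add)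
  moreover have "(a - ?p) \<bullet> ((?p - w) - ?p) \<le> 0"
    using S p w by (intro closest_point_dot) (auto simp: subspace_imp_convex closed_subspace subspace_diff)
  ultimately show ?thesis by simp
qed

lemma closest_point_subspace_eqI:
  fixes S :: "'a::euclidean_space set"
  assumes S: "subspace S" and y: "y \<in> S" and orth: "\<And>w. w \<in> S \<Longrightarrow> (a - y) \<bullet> w = 0"
  shows "closest_point S a = y"
proof -
  let ?p = "closest_point S a"
  have "?p - y \<in> S" using closest_point_subspace_in[OF S] y S by (simp add: subspace_diff)
  then have "(a - y) \<bullet> (?p - y) = 0" "(a - ?p) \<bullet> (?p - y) = 0"
    using orth closest_point_subspace_orthogonal[OF S] by auto
  then have "(?p - y) \<bullet> (?p - y) = 0"
    by (simp add: inner_diff_left)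
  then show ?thesis by simp
qed

lemma linear_closest_point_subspace:
  fixes S :: "'a::euclidean_space set"
  assumes S: "subspace S"
  shows "linear (closest_point S)"
proof (rule linearI)
  note in_S = closest_point_subspace_in[OF S] and orth = closest_point_subspace_orthogonal[OF S]
  fix x y
  show "closest_point S (x + y) = closest_point S x + closest_point S y"
  proof (rule closest_point_subspace_eqI[OF S])
    show "closest_point S x + closest_point S y \<in> S" using in_S S by (simp add: subspace_add)
    fix w assume "w \<in> S"
    moreover have "x + y - (closest_point S x + closest_point S y)
        = (x - closest_point S x) + (y - closest_point S y)" by simp
    ultimately show "(x + y - (closest_point S x + closest_point S y)) \<bullet> w = 0"
      using orth by (simp only: inner_add_left)
  qed
next
  note in_S = closest_point_subspace_in[OF S] and orth = closest_point_subspace_orthogonal[OF S]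
  fix c :: real and x
  show "closest_point S (c *\<^sub>R x) = c *\<^sub>R closest_point S x"
  proof (rule closest_point_subspace_eqI[OF S])
    show "c *\<^sub>R closest_point S x \<in> S" using in_S S by (simp add: subspace_scale)
    fix w assume "w \<in> S"
    moreover have "c *\<^sub>R x - c *\<^sub>R closest_point S x = c *\<^sub>R (x - closest_point S x)"
      by (simp add: scaleR_diff_right)
    ultimately show "(c *\<^sub>R x - c *\<^sub>R closest_point S x) \<bullet> w = 0"
      using orth by (simp only: inner_scaleR_left)
  qed
qed

lemma closest_point_subspace_self_adjoint:
  fixes S :: "'a::euclidean_space set"
  assumes S: "subspace S"
  shows "closest_point S x \<bullet> y = x \<bullet> closest_point S y"
proof -
  have "closest_point S x \<bullet> (y - closest_point S y) = 0"
       "(x - closest_point S x) \<bullet> closest_point S y = 0"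
    using closest_point_subspace_orthogonal[OF S] closest_point_subspace_in[OF S]
    by (auto simp: inner_commute)
  then show ?thesis by (simp add: inner_diff_left inner_diff_right)
qed

definition penrose :: "real^'n^'m \<Rightarrow> real^'m^'n \<Rightarrow> bool" where
  "penrose A B \<longleftrightarrow> A ** B ** A = A \<and> B ** A ** B = B \<and>
                    transpose (A ** B) = A ** B \<and> transpose (B ** A) = B ** A"

lemma transpose_eq_if_self_adjoint:
  fixes M :: "real^'n^'n"
  assumes "\<And>x y. (M *v x) \<bullet> y = x \<bullet> (M *v y)"
  shows "transpose M = M"
proof -
  have "transpose M *v x = M *v x" for x
  proof -
    have "(transpose M *v x - M *v x) \<bullet> y = 0" for y
      using assms[of x y] by (simp add: inner_diff_left dot_lmul_matrix)
    from this[of "transpose M *v x - M *v x"] show ?thesis by simp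
  qed
  then show ?thesis by (simp add: matrix_eq)
qed

lemma subspace_range_matrix_vector_mult: "subspace (range ((*v) (A :: real^'n^'m)))"
  by (rule real_vector.linear_subspace_image[OF matrix_vector_mul_linear subspace_UNIV])

lemma matrix_vector_mult_closest_point_row_space:
  fixes A :: "real^'n^'m"
  shows "A *v closest_point (range ((*v) (transpose A))) x = A *v x"
proof -
  let ?d = "x - closest_point (range ((*v) (transpose A))) x"
  have "(A *v ?d) \<bullet> w = 0" for w
    using closest_point_subspace_orthogonal[OF subspace_range_matrix_vector_mult[of "transpose A"],
        of "transpose A *v w" x]
    by (simp add: dot_lmul_matrix inner_commute)
  from this[of "A *v ?d"] show ?thesis by (simp add: matrix_vector_mult_diff_distrib)
qed

lemma linear_left_inverse_on_row_space:
  fixes A :: "real^'n^'m"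
  obtains g where "linear g" and "\<And>x. g (A *v x) = closest_point (range ((*v) (transpose A))) x"
proof -
  define V where "V = range ((*v) (transpose A))"
  have V: "subspace V" unfolding V_def by (rule subspace_range_matrix_vector_mult)
  then have span_V: "span V = V" by (simp add: span_eq_iff)
  have "inj_on ((*v) A) (span V)"
  proof (rule inj_onI)
    fix u v assume "u \<in> span V" "v \<in> span V" and eq: "A *v u = A *v v"
    then have "u - v \<in> V" using span_V subspace_diff[OF V] by metis
    then obtain w where w: "u - v = transpose A *v w" by (auto simp: V_def)
    have "(u - v) \<bullet> (u - v) = w \<bullet> (A *v (u - v))"
      unfolding w by (simp add: dot_lmul_matrix)
    also have "\<dots> = 0" using eq by (simp add: matrix_vector_mult_diff_distrib)
    finally show "u = v" by simp
  qed
  then obtain g where "linear g" and g: "\<And>v. v \<in> V \<Longrightarrow> g (A *v v) = v"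
    using real_vector.linear_inj_on_left_inverse[OF matrix_vector_mul_linear] span_V by metis
  moreover have "g (A *v x) = closest_point V x" for x
    using g[OF closest_point_subspace_in[OF V]] matrix_vector_mult_closest_point_row_space
    unfolding V_def by metis
  ultimately show ?thesis using that unfolding V_def by blast
qed

text \<open>The witness is \<open>g \<circ> P\<^sub>W\<close>, where \<open>P\<^sub>W\<close> projects onto the column space \<open>W\<close>
  and \<open>g\<close> inverts \<open>A\<close> on the row space \<open>V\<close>; then \<open>A B = P\<^sub>W\<close> and \<open>B A = P\<^sub>V\<close>.\<close>

lemma penrose_exists:
  fixes A :: "real^'n^'m"
  shows "\<exists>B. penrose A B"
proof -
  define V where "V = range ((*v) (transpose A))"
  define W where "W = range ((*v) A)"
  have V: "subspace V" and W: "subspace W"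
    unfolding V_def W_def by (rule subspace_range_matrix_vector_mult)+
  obtain g where "linear g" and g_A: "\<And>x. g (A *v x) = closest_point V x"
    using linear_left_inverse_on_row_space[of A] unfolding V_def by blast
  have A_g: "A *v g y = y" if "y \<in> W" for y
    using that g_A matrix_vector_mult_closest_point_row_space by (auto simp: W_def V_def)
  define B where "B = matrix (g \<circ> closest_point W)"
  have B: "B *v y = g (closest_point W y)" for y
    unfolding B_def using \<open>linear g\<close> linear_closest_point_subspace[OF W]
    by (simp add: matrix_works linear_compose linear_matrix_vector_mul_eq)
  have AB: "A *v (B *v y) = closest_point W y" for y
    using B A_g closest_point_subspace_in[OF W] by simp
  have BA: "B *v (A *v x) = closest_point V x" for x
    using B g_A by (simp add: W_def closest_point_self)
  have "A ** B ** A = A"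
    using BA matrix_vector_mult_closest_point_row_space[of A]
    by (simp add: matrix_eq V_def flip: matrix_vector_mul_assoc)
  moreover have "B ** A ** B = B"
    using AB B closest_point_self[OF closest_point_subspace_in[OF W]]
    by (simp add: matrix_eq flip: matrix_vector_mul_assoc)
  moreover have "transpose (A ** B) = A ** B"
    by (rule transpose_eq_if_self_adjoint)
       (simp add: AB closest_point_subspace_self_adjoint[OF W] flip: matrix_vector_mul_assoc)
  moreover have "transpose (B ** A) = B ** A"
    by (rule transpose_eq_if_self_adjoint)
       (simp add: BA closest_point_subspace_self_adjoint[OF V] flip: matrix_vector_mul_assoc)
  ultimately show ?thesis unfolding penrose_def by blast
qed

lemma penrose_unique:
  fixes A :: "real^'n^'m"
  assumes "penrose A B" and "penrose A C"
  shows "B = C"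
proof -
  have b1: "A ** B ** A = A" and b2: "B ** A ** B = B" and b3: "transpose (A ** B) = A ** B"
    and b4: "transpose (B ** A) = B ** A"
    and c1: "A ** C ** A = A" and c2: "C ** A ** C = C" and c3: "transpose (A ** C) = A ** C"
    and c4: "transpose (C ** A) = C ** A"
    using assms unfolding penrose_def by auto
  have At_C: "transpose A = transpose A ** (A ** C)"
    by (metis c1 c3 matrix_transpose_mul)
  have At_B: "transpose A = B ** A ** transpose A"
    by (metis b1 b4 matrix_mul_assoc matrix_transpose_mul)
  have "B = B ** transpose (A ** B)" using b2 b3 by (simp add: matrix_mul_assoc)
  also have "\<dots> = B ** transpose B ** (transpose A ** (A ** C))"
    using At_C by (simp add: matrix_transpose_mul matrix_mul_assoc)
  also have "\<dots> = B ** transpose (A ** B) ** A ** C"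
    by (simp add: matrix_transpose_mul matrix_mul_assoc)
  also have "\<dots> = B ** A ** C" using b3 b2 by (simp add: matrix_mul_assoc)
  finally have B: "B = B ** A ** C" .
  have "C = transpose (C ** A) ** C" using c2 c4 by simp
  also have "\<dots> = B ** A ** transpose A ** transpose C ** C"
    using At_B by (simp add: matrix_transpose_mul)
  also have "\<dots> = B ** A ** C"
    using c2 c4 by (metis matrix_mul_assoc matrix_transpose_mul)
  finally show ?thesis using B by simp
qed

lemma penrose_pinv: "penrose A (pinv A)"
proof -
  obtain B where B: "penrose A B" using penrose_exists by blast
  then have "penrose A (THE B. penrose A B)"
    by (rule theI) (use B penrose_unique in blast)
  then show ?thesis unfolding pinv_def penrose_def by simp
qed

lemma pinv_mult_mult_transpose: "pinv A ** A ** transpose A = transpose A"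
proof -
  have "A ** pinv A ** A = A" and "transpose (pinv A ** A) = pinv A ** A"
    using penrose_pinv[of A] unfolding penrose_def by auto
  then show ?thesis by (metis matrix_mul_assoc matrix_transpose_mul)
qed

lemma pinv_complement_transpose_eq_0: "(mat 1 - pinv A ** A) *v (transpose A *v r) = 0"
proof -
  have "pinv A ** A *v (transpose A *v r) = transpose A *v r"
    by (metis matrix_vector_mul_assoc pinv_mult_mult_transpose)
  then show ?thesis by (simp add: matrix_vector_mult_diff_rdistrib)
qed

definition flow_potential :: "nat \<Rightarrow> real \<Rightarrow> real" where
  "flow_potential L u = (if L = 2 then ln u else u powr (2 - real L))"

lemma h0_eq_flow_potential:
  "h0 A L x = (mat 1 - pinv A ** A) *v (\<chi> i. flow_potential L (x $ i))"
  by (cases "L = 2") (simp_all add: h0_def flow_potential_def)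

lemma has_real_derivative_flow_potential:
  assumes "L \<ge> 1" and u: "u > 0"
  shows "(flow_potential L has_real_derivative (if L = 2 then 1 else 2 - real L) / u ^ (L - 1)) (at u)"
proof (cases "L = 2")
  case True
  then have "flow_potential L = ln" by (auto simp: flow_potential_def)
  then show ?thesis using True DERIV_ln[OF u] by (simp add: divide_inverse)
next
  case False
  have "u powr (2 - real L - 1) = u powr (- real (L - 1))"
    using assms by (simp add: of_nat_diff)
  also have "\<dots> = 1 / u ^ (L - 1)"
    using u by (simp add: powr_minus powr_realpow divide_inverse)
  finally have "u powr (2 - real L - 1) = 1 / u ^ (L - 1)" .
  moreover have "flow_potential L = (\<lambda>u. u powr (2 - real L))"
    using False by (auto simp: flow_potential_def)
  ultimately show ?thesis
    using False has_real_derivative_powr[OF u, of "2 - real L"] by simp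
qed

lemma has_vector_derivative_vec_nth:
  assumes "(f has_vector_derivative f') F"
  shows "((\<lambda>s. f s $ j) has_real_derivative f' $ j) F"
proof -
  have "((\<lambda>s. f s $ j) has_derivative (\<lambda>h. (h *\<^sub>R f') $ j)) F"
    using bounded_linear.has_derivative[OF bounded_linear_vec_nth]
      assms[unfolded has_vector_derivative_def] .
  then show ?thesis by (simp add: has_field_derivative_def mult_commute_abs)
qed

lemma matrix_vector_mult_constant_if_derivative_in_kernel:
  fixes F F' :: "real \<Rightarrow> real^'n" and Q :: "real^'n^'k"
  assumes "convex S"
    and deriv: "\<And>t j. t \<in> S \<Longrightarrow> ((\<lambda>s. F s $ j) has_real_derivative F' t $ j) (at t within S)"
    and kernel: "\<And>t. t \<in> S \<Longrightarrow> Q *v F' t = 0"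
    and "s \<in> S" "t \<in> S"
  shows "Q *v F s = Q *v F t"
proof -
  have "((\<lambda>s. (Q *v F s) $ i) has_real_derivative 0) (at t within S)" if "t \<in> S" for t i
  proof -
    have "((\<lambda>s. \<Sum>j\<in>UNIV. Q $ i $ j * F s $ j) has_real_derivative
           (\<Sum>j\<in>UNIV. Q $ i $ j * F' t $ j)) (at t within S)"
      by (intro DERIV_sum DERIV_cmult deriv that)
    then show ?thesis using kernel[OF that] by (simp add: matrix_vector_mult_def vec_eq_iff)
  qed
  then have "\<exists>c. \<forall>t\<in>S. (Q *v F t) $ i = c" for i
    using \<open>convex S\<close> by (intro has_field_derivative_zero_constant)
  then show ?thesis using assms(4,5) by (metis vec_eq_iff)
qed

theorem mainTheorem9:
  fixes A :: "real^'n^'m" and b :: "real^'m" and L :: nat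
    and x :: "real \<Rightarrow> real^'n" and x0 :: "real^'n"
  assumes L_pos: "L \<ge> 1"
    and flow: "\<And>t. t \<ge> 0 \<Longrightarrow>
                 (x has_vector_derivative (- gradL A b L (x t))) (at t within {0..})"
    and init: "x 0 = x0"
    and x0_pos: "\<And>i. x0 $ i > 0"
    and x_pos: "\<And>t i. t \<ge> 0 \<Longrightarrow> x t $ i > 0"
  shows "\<forall>t\<ge>0. h0 A L (x t) = h0 A L (x 0)"
proof -
  let ?c = "if L = 2 then 1 else 2 - real L"
  let ?g = "\<lambda>s. transpose A *v (A *v epow (x s) L - b)"
  have "((\<lambda>s. flow_potential L (x s $ j)) has_real_derivative (- ?c *\<^sub>R ?g s) $ j)
          (at s within {0..})" if s: "s \<ge> 0" for s j
  proof -
    have "((\<lambda>s. x s $ j) has_real_derivative - (?g s $ j * x s $ j ^ (L - 1))) (at s within {0..})"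
      using has_vector_derivative_vec_nth[OF flow[OF s]] by (simp add: gradL_def)
    from DERIV_chain2[OF has_real_derivative_flow_potential[OF L_pos x_pos[OF s]] this]
    show ?thesis using x_pos[OF s, of j] by simp
  qed
  moreover have "(mat 1 - pinv A ** A) *v (- ?c *\<^sub>R ?g s) = 0" for s
    by (simp only: matrix_vector_mult_scaleR pinv_complement_transpose_eq_0 scaleR_zero_right)
  ultimately show ?thesis
    unfolding h0_eq_flow_potential
    by (auto intro!: matrix_vector_mult_constant_if_derivative_in_kernel[of "{0..}"])
qed

end
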